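(* Let $0<\lambda<1$ and let $A \subseteq \mathbb{N}$. Suppose there exists a sequence $(c_n)_{n \in \mathbb{N}}$ of positive real numbers with $\lim_{n\to\infty} c_n = 0$ such that for every $n \in \mathbb{N}$, $$\sum_{a \in A[x]} \frac{c_n(1-\lambda)\log(a)\exp(c_n a^{1-\lambda})}{a^\lambda} \sim \exp(c_n x^{1-\lambda}) \qquad (x\to\infty).$$ Then $$\pi_A(x + x^\lambda) - \pi_A(x) \sim \frac{x^\lambda}{\log(x)}.$$
   Context: Here $\mathbb{N} = \{1,2,3,\dots\}$. For $A \subseteq \mathbb{N}$ and $x\in\mathbb{R}$, write $A[x] = \{a \in A : a \le x\}$ and $\pi_A(x) = \# A[x]$. $f\sim g$ means $f(x)/g(x)\to 1$ as $x\to\infty$. *)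

theory Defs
  imports "HOL-Analysis.Analysis" "HOL-Library.Landau_Symbols"
begin

text \<open>A[x] = {a in A. a <= x} and pi_A(x) = #A[x], for A a set of positive naturals.\<close>

definition upto_set :: "nat set \<Rightarrow> real \<Rightarrow> nat set" where
  "upto_set A x = {a \<in> A. real a \<le> x}"

definition countA :: "nat set \<Rightarrow> real \<Rightarrow> nat" where
  "countA A x = card (upto_set A x)"

end

theory Submission
  imports Defs "HOL-Real_Asymp.Real_Asymp"
begin

text \<open>
  Write T(x) = exp (c x powr (1 - lam)) and S(x) for the weighted sum of the hypothesis, so that
  S ~ T. On the window (x, x + x powr lam] every weight lies between
  u ln x T(x) / (x + x powr lam) powr lam and u ln (x + x powr lam) T(x + x powr lam) / x powr lam,
  where u = c (1 - lam), while T(x + x powr lam) / T(x) tends to exp u. Since S ~ T, the window sum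
  S(x + x powr lam) - S(x) is asymptotic to (exp u - 1) T(x), so the normalised window count
  (pi_A(x + x powr lam) - pi_A(x)) ln x / x powr lam is eventually squeezed between
  (1 - exp (- u)) / u and (exp u - 1) / u, up to any positive error. Both bounds tend to 1 as
  c tends to 0, which the sequence c_n makes possible.
\<close>

lemma finite_upto_set: "finite (upto_set A x)"
proof (rule finite_subset)
  show "upto_set A x \<subseteq> {..nat \<lfloor>x\<rfloor>}"
    unfolding upto_set_def by (auto simp: le_nat_floor)
qed simp

lemma upto_set_mono: "x \<le> y \<Longrightarrow> upto_set A x \<subseteq> upto_set A y"
  unfolding upto_set_def by auto

lemma mem_upto_set_diff:
  "a \<in> upto_set A y - upto_set A x \<longleftrightarrow> a \<in> A \<and> x < real a \<and> real a \<le> y"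
  unfolding upto_set_def by auto

lemma sum_upto_set_diff:
  fixes f :: "nat \<Rightarrow> 'b::ab_group_add"
  assumes "x \<le> y"
  shows "sum f (upto_set A y) - sum f (upto_set A x) = sum f (upto_set A y - upto_set A x)"
  by (simp add: sum_diff finite_upto_set upto_set_mono[OF assms])

lemma countA_diff:
  assumes "x \<le> y"
  shows "real (countA A y) - real (countA A x) = real (card (upto_set A y - upto_set A x))"
  using sum_upto_set_diff[OF assms, of "\<lambda>_. 1::real" A] by (simp add: countA_def)

lemma tendsto_of_eventual_bounds:
  fixes R :: "'a \<Rightarrow> real" and lo hi :: "'b \<Rightarrow> real"
  assumes "(lo \<longlongrightarrow> l) G" and "(hi \<longlongrightarrow> l) G" and "G \<noteq> bot"
    and "\<forall>\<^sub>F n in G. \<forall>d>0. \<forall>\<^sub>F x in F. lo n - d < R x \<and> R x < hi n + d"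
  shows "(R \<longlongrightarrow> l) F"
proof (rule tendstoI)
  fix e :: real assume "e > 0"
  then have "\<forall>\<^sub>F n in G. l - e/2 < lo n" "\<forall>\<^sub>F n in G. hi n < l + e/2"
    using order_tendstoD(1)[OF assms(1)] order_tendstoD(2)[OF assms(2)] by simp_all
  with assms(4) have "\<forall>\<^sub>F n in G. l - e/2 < lo n \<and> hi n < l + e/2 \<and>
      (\<forall>d>0. \<forall>\<^sub>F x in F. lo n - d < R x \<and> R x < hi n + d)"
    by eventually_elim blast
  then obtain n where n: "l - e/2 < lo n" "hi n < l + e/2"
      and bounds: "\<forall>d>0. \<forall>\<^sub>F x in F. lo n - d < R x \<and> R x < hi n + d"
    using eventually_happens' assms(3) by blast
  from bounds \<open>e > 0\<close> have "\<forall>\<^sub>F x in F. lo n - e/2 < R x \<and> R x < hi n + e/2"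
    by simp
  then show "\<forall>\<^sub>F x in F. dist (R x) l < e"
    by eventually_elim (use n in \<open>auto simp: dist_real_def abs_less_iff\<close>)
qed

definition weight :: "real \<Rightarrow> real \<Rightarrow> real \<Rightarrow> real" where
  "weight lam c y = c * (1 - lam) * ln y * exp (c * y powr (1 - lam)) / y powr lam"

lemma weight_bounds:
  assumes "0 < lam" "lam < 1" "c > 0" and "1 \<le> x" "x \<le> y" "y \<le> z"
  shows "c * (1 - lam) * ln x * exp (c * x powr (1 - lam)) / z powr lam \<le> weight lam c y"
    and "weight lam c y \<le> c * (1 - lam) * ln z * exp (c * z powr (1 - lam)) / x powr lam"
proof -
  define u where "u = c * (1 - lam)"
  have "u > 0" using assms by (simp add: u_def)
  have ln: "0 \<le> ln x" "ln x \<le> ln y" "ln y \<le> ln z"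
    using assms by auto
  have exp: "exp (c * x powr (1 - lam)) \<le> exp (c * y powr (1 - lam))"
      "exp (c * y powr (1 - lam)) \<le> exp (c * z powr (1 - lam))"
    using assms by (auto intro!: mult_left_mono powr_mono2)
  have pow: "0 < x powr lam" "0 < y powr lam" "0 < z powr lam" "x powr lam \<le> y powr lam" "y powr lam \<le> z powr lam"
    using assms by (auto intro!: powr_mono2)
  have num_lo: "u * ln x * exp (c * x powr (1 - lam)) \<le> u * ln y * exp (c * y powr (1 - lam))"
    and num_hi: "u * ln y * exp (c * y powr (1 - lam)) \<le> u * ln z * exp (c * z powr (1 - lam))"
    using \<open>u > 0\<close> ln exp by (auto intro!: mult_mono)
  have "u * ln x * exp (c * x powr (1 - lam)) / z powr lam
      \<le> u * ln x * exp (c * x powr (1 - lam)) / y powr lam"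
    using \<open>u > 0\<close> ln pow by (intro divide_left_mono) auto
  also have "\<dots> \<le> weight lam c y"
    unfolding weight_def u_def[symmetric] using num_lo pow by (intro divide_right_mono) auto
  finally show "c * (1 - lam) * ln x * exp (c * x powr (1 - lam)) / z powr lam \<le> weight lam c y"
    by (simp add: u_def)
  have "weight lam c y \<le> u * ln z * exp (c * z powr (1 - lam)) / y powr lam"
    unfolding weight_def u_def[symmetric] using num_hi pow by (intro divide_right_mono) auto
  also have "\<dots> \<le> u * ln z * exp (c * z powr (1 - lam)) / x powr lam"
    using \<open>u > 0\<close> ln pow by (intro divide_left_mono) auto
  finally show "weight lam c y \<le> c * (1 - lam) * ln z * exp (c * z powr (1 - lam)) / x powr lam"
    by (simp add: u_def)
qed

locale window_setting =
  fixes lam c :: real and A :: "nat set"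
  assumes lam_pos: "0 < lam" and lam_less_1: "lam < 1" and c_pos: "c > 0"
begin

definition u :: real where "u = c * (1 - lam)"

definition T :: "real \<Rightarrow> real" where "T y = exp (c * y powr (1 - lam))"

definition S :: "real \<Rightarrow> real" where "S y = (\<Sum>a\<in>upto_set A y. weight lam c (real a))"

definition window_count :: "real \<Rightarrow> real" where
  "window_count x = real (countA A (x + x powr lam)) - real (countA A x)"

definition window_sum :: "real \<Rightarrow> real" where
  "window_sum x = S (x + x powr lam) - S x"

lemma u_pos: "u > 0"
  using lam_less_1 c_pos by (simp add: u_def)

lemma T_pos: "T y > 0"
  by (simp add: T_def)

lemma T_neq_0 [simp]: "T y \<noteq> 0"
  by (simp add: T_def)

lemma window_sum_bounds:
  assumes "x \<ge> 1"
  shows "window_count x * (u * ln x * T x / (x + x powr lam) powr lam) \<le> window_sum x"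
    and "window_sum x \<le> window_count x * (u * ln (x + x powr lam) * T (x + x powr lam) / x powr lam)"
proof -
  define W where "W = upto_set A (x + x powr lam) - upto_set A x"
  have shift: "x \<le> x + x powr lam" by simp
  have count: "window_count x = real (card W)"
    unfolding window_count_def W_def by (rule countA_diff[OF shift])
  have sum: "window_sum x = (\<Sum>a\<in>W. weight lam c (real a))"
    unfolding window_sum_def S_def W_def by (rule sum_upto_set_diff[OF shift])
  have "x \<le> real a" "real a \<le> x + x powr lam" if "a \<in> W" for a
    using that unfolding W_def mem_upto_set_diff by auto
  note weight_bounds[OF lam_pos lam_less_1 c_pos \<open>x \<ge> 1\<close> this]
  then show "window_count x * (u * ln x * T x / (x + x powr lam) powr lam) \<le> window_sum x"
    and "window_sum x \<le> window_count x * (u * ln (x + x powr lam) * T (x + x powr lam) / x powr lam)"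
    unfolding count sum u_def T_def
    by (simp_all only: sum_bounded_below sum_bounded_above)
qed

lemma normalised_count_upper:
  assumes "x \<ge> 1"
  shows "window_count x * ln x / x powr lam
      \<le> window_sum x / T x / u * ((x + x powr lam) powr lam / x powr lam)"
proof -
  have "0 < x powr lam"
    using assms by simp
  moreover from this have "0 < x + x powr lam"
    using assms by linarith
  ultimately have pos: "0 < x powr lam" "0 < (x + x powr lam) powr lam"
    by simp_all
  have "window_count x * ln x / x powr lam
      = window_count x * (u * ln x * T x / (x + x powr lam) powr lam) / T x / u
        * ((x + x powr lam) powr lam / x powr lam)"
    using pos T_pos u_pos by (simp add: field_simps)
  also have "\<dots> \<le> window_sum x / T x / u * ((x + x powr lam) powr lam / x powr lam)"
    using window_sum_bounds(1)[OF assms] pos T_pos[of x] u_pos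
    by (intro mult_right_mono divide_right_mono) auto
  finally show ?thesis .
qed

lemma normalised_count_lower:
  assumes "x \<ge> 1"
  shows "window_sum x / T x / u * (ln x / ln (x + x powr lam)) * (T x / T (x + x powr lam))
      \<le> window_count x * ln x / x powr lam"
proof -
  have "0 < x powr lam"
    using assms by simp
  moreover from this have "1 < x + x powr lam"
    using assms by linarith
  ultimately have pos: "0 < x powr lam" "0 < ln (x + x powr lam)" "0 \<le> ln x"
    using assms by simp_all
  define K where "K = ln x / (u * ln (x + x powr lam) * T (x + x powr lam))"
  have "K \<ge> 0"
    using pos T_pos u_pos by (auto simp: K_def intro!: divide_nonneg_pos)
  have "window_sum x / T x / u * (ln x / ln (x + x powr lam)) * (T x / T (x + x powr lam))
      = window_sum x * K"
    using pos T_pos u_pos by (simp add: K_def field_simps)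
  also have "\<dots> \<le> window_count x * (u * ln (x + x powr lam) * T (x + x powr lam) / x powr lam) * K"
    using window_sum_bounds(2)[OF assms] \<open>K \<ge> 0\<close> by (rule mult_right_mono)
  also have "\<dots> = window_count x * ln x / x powr lam"
    using pos T_pos u_pos by (simp add: K_def field_simps)
  finally show ?thesis .
qed

lemma T_shift_ratio: "((\<lambda>x. T (x + x powr lam) / T x) \<longlongrightarrow> exp u) at_top"
proof -
  have "((\<lambda>x. (x + x powr lam) powr (1 - lam) - x powr (1 - lam)) \<longlongrightarrow> 1 - lam) at_top"
    using lam_pos lam_less_1 by real_asymp
  from tendsto_mult_left[OF this, of c]
  have "((\<lambda>x. exp (c * ((x + x powr lam) powr (1 - lam) - x powr (1 - lam))))
      \<longlongrightarrow> exp (c * (1 - lam))) at_top"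
    by (rule tendsto_exp)
  then show ?thesis
    unfolding T_def u_def by (simp add: exp_diff[symmetric] algebra_simps)
qed

lemma window_sum_ratio:
  assumes "S \<sim>[at_top] T"
  shows "((\<lambda>x. window_sum x / T x) \<longlongrightarrow> exp u - 1) at_top"
proof -
  have ratio: "((\<lambda>x. S x / T x) \<longlongrightarrow> 1) at_top"
    using asymp_equivD[OF assms] by (simp add: T_def)
  have "filterlim (\<lambda>x. x + x powr lam) at_top at_top"
    using lam_pos lam_less_1 by real_asymp
  from filterlim_compose[OF ratio this]
  have "((\<lambda>x. S (x + x powr lam) / T (x + x powr lam) * (T (x + x powr lam) / T x) - S x / T x)
      \<longlongrightarrow> 1 * exp u - 1) at_top"
    by (intro tendsto_intros ratio T_shift_ratio) (simp add: o_def)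
  then show ?thesis
    by (simp add: window_sum_def diff_divide_distrib T_def)
qed

lemma eventually_normalised_count_between:
  assumes "S \<sim>[at_top] T" and "d > 0"
  shows "\<forall>\<^sub>F x in at_top. (exp u - 1) / u * exp (- u) - d < window_count x * ln x / x powr lam
      \<and> window_count x * ln x / x powr lam < (exp u - 1) / u + d"
proof -
  have ln_ratio: "((\<lambda>x. ln x / ln (x + x powr lam)) \<longlongrightarrow> 1) at_top"
    and powr_ratio: "((\<lambda>x. (x + x powr lam) powr lam / x powr lam) \<longlongrightarrow> 1) at_top"
    using lam_pos lam_less_1 by real_asymp+
  have T_ratio: "((\<lambda>x. T x / T (x + x powr lam)) \<longlongrightarrow> exp (- u)) at_top"
    using tendsto_inverse[OF T_shift_ratio] by (simp add: exp_minus)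
  have lower: "((\<lambda>x. window_sum x / T x / u * (ln x / ln (x + x powr lam)) * (T x / T (x + x powr lam)))
      \<longlongrightarrow> (exp u - 1) / u * 1 * exp (- u)) at_top"
    by (intro tendsto_intros window_sum_ratio[OF assms(1)] ln_ratio T_ratio) (use u_pos in simp)
  have upper: "((\<lambda>x. window_sum x / T x / u * ((x + x powr lam) powr lam / x powr lam))
      \<longlongrightarrow> (exp u - 1) / u * 1) at_top"
    by (intro tendsto_intros window_sum_ratio[OF assms(1)] powr_ratio) (use u_pos in simp)
  have "\<forall>\<^sub>F x in at_top. (exp u - 1) / u * exp (- u) - d
      < window_sum x / T x / u * (ln x / ln (x + x powr lam)) * (T x / T (x + x powr lam))"
    using order_tendstoD(1)[OF lower] assms(2) by simp
  moreover have "\<forall>\<^sub>F x in at_top.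
      window_sum x / T x / u * ((x + x powr lam) powr lam / x powr lam) < (exp u - 1) / u + d"
    using order_tendstoD(2)[OF upper] assms(2) by simp
  moreover have "\<forall>\<^sub>F x in at_top. (x::real) \<ge> 1"
    by (rule eventually_ge_at_top)
  ultimately show ?thesis
    by eventually_elim (use normalised_count_lower normalised_count_upper in fastforce)
qed

end

lemma tendsto_exp_minus_1_over_at_right_0:
  "((\<lambda>u::real. (exp u - 1) / u) \<longlongrightarrow> 1) (at_right 0)"
  by real_asymp

lemma tendsto_exp_minus_1_over_times_exp_neg_at_right_0:
  "((\<lambda>u::real. (exp u - 1) / u * exp (- u)) \<longlongrightarrow> 1) (at_right 0)"
  by real_asymp

theorem mainTheorem6:
  fixes lam :: real and A :: "nat set" and c :: "nat \<Rightarrow> real"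
  assumes "0 < lam" and "lam < 1"
    and "0 \<notin> A"
    and "\<And>n. n \<ge> 1 \<Longrightarrow> c n > 0"
    and "c \<longlonglongrightarrow> 0"
    and "\<And>n. n \<ge> 1 \<Longrightarrow>
      (\<lambda>x::real. \<Sum>a\<in>upto_set A x.
         c n * (1 - lam) * ln (real a) * exp (c n * real a powr (1 - lam)) / real a powr lam)
      \<sim>[at_top] (\<lambda>x. exp (c n * x powr (1 - lam)))"
  shows "(\<lambda>x::real. real (countA A (x + x powr lam)) - real (countA A x))
      \<sim>[at_top] (\<lambda>x. x powr lam / ln x)"
proof -
  define rate where "rate n = c n * (1 - lam)" for n
  define R where "R x = (real (countA A (x + x powr lam)) - real (countA A x)) * ln x / x powr lam"
    for x
  have rate: "filterlim rate (at_right 0) sequentially"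
  proof (rule tendsto_imp_filterlim_at_right)
    show "rate \<longlonglongrightarrow> 0"
      using tendsto_mult_left_zero[OF assms(5), of "1 - lam"] by (simp add: rate_def[abs_def])
    show "\<forall>\<^sub>F n in sequentially. rate n > 0"
      unfolding eventually_sequentially rate_def using assms(2,4) by (auto intro!: exI[of _ 1])
  qed
  have "(R \<longlongrightarrow> 1) at_top"
  proof (rule tendsto_of_eventual_bounds)
    show "((\<lambda>n. (exp (rate n) - 1) / rate n * exp (- rate n)) \<longlongrightarrow> 1) sequentially"
      using filterlim_compose[OF tendsto_exp_minus_1_over_times_exp_neg_at_right_0 rate] by simp
    show "((\<lambda>n. (exp (rate n) - 1) / rate n) \<longlongrightarrow> 1) sequentially"
      using filterlim_compose[OF tendsto_exp_minus_1_over_at_right_0 rate] by simp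
    show "\<forall>\<^sub>F n in sequentially. \<forall>d>0. \<forall>\<^sub>F x in at_top.
        (exp (rate n) - 1) / rate n * exp (- rate n) - d < R x \<and> R x < (exp (rate n) - 1) / rate n + d"
      using eventually_ge_at_top[of 1]
    proof eventually_elim
      case (elim n)
      interpret window_setting lam "c n" A
        using assms(1,2,4) elim by unfold_locales auto
      have "S \<sim>[at_top] T"
        using assms(6)[OF elim] unfolding S_def[abs_def] T_def[abs_def] weight_def .
      then show ?case
        using eventually_normalised_count_between
        by (simp add: R_def[abs_def] rate_def u_def window_count_def)
    qed
  qed simp
  then show ?thesis
    by (intro asymp_equivI') (simp add: R_def[abs_def])
qed

end
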